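(* Let $g$ be an $n$-person no-sink WTT game form satisfying the standing assumptions below, and let $1\le k\le n$. Then $g$ contains no $k$-box.
   Context: Let $X_1,\dots,X_n$ and $A$ be finite nonempty sets. An $n$-person game form is a map $g: X_1\times\cdots\times X_n\to A$; elements of $X=X_1\times\cdots\times X_n$ are strategy profiles. For a direction $i\in[n]$ write $X_{-i}=\prod_{t\neq i}X_t$, and for $s\in X_i$, $y\in X_{-i}$ write $(s,y)$ for the profile with $i$-th coordinate $s$ and other coordinates $y$. The hyperplane perpendicular to direction $i$ at $s\in X_i$ is $H_s=\{x\in X: x_i=s\}$; for a profile $x$ write $H_i^x$ for the hyperplane perpendicular to direction $i$ containing $x$. $g$ is weakly totally tight (WTT) if for every $i\in[n]$, all $s\neq s'$ in $X_i$ and all $y\neq y'$ in $X_{-i}$, at least one of $g(s,y)=g(s,y')$, $g(s,y)=g(s',y)$, $g(s',y')=g(s',y)$, $g(s',y')=g(s,y')$ holds. A set $S\subseteq X$ is a constant region if there is $c\in A$ with $g(x)=c$ for all $x\in S$. For distinct $j,k\in X_i$, $H_j^{\neq}(k)=\{(j,y): y\in X_{-i},\ g(j,y)\neq g(k,y)\}$. We write $H_j\stackrel{c}{\longrightarrow}H_k$ if $g(x)=c$ for all $x\in H_j^{\neq}(k)$, and $H_j\stackrel{c}{\Longrightarrow}H_k$ if $H_j\stackrel{c}{\longrightarrow}H_k$ and there is no outcome $d$ with $H_k\stackrel{d}{\longrightarrow}H_j$. If there exist $k\in X_i\setminus\{j\}$ and $c$ with $H_j\stackrel{c}{\Longrightarrow}H_k$,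 $c$ is called the proper outcome of $H_j$ (for WTT $g$ it does not depend on $k$). We say an outcome $a$ is not the proper outcome of a hyperplane $H$ if $H$ has no proper outcome or its proper outcome differs from $a$. $H_j$ is a sink hyperplane if for every $k\in X_i\setminus\{j\}$ there is an outcome $c_k$ with $H_k\stackrel{c_k}{\longrightarrow}H_j$; $g$ is no-sink if there is no sink hyperplane in any direction. A WTT no-sink $g$ contains a $k$-box if there are profiles $x,y$ such that: $g(x)\neq g(y)$; $x$ and $y$ differ in exactly $k$ coordinates $i_1,\dots,i_k$; and for every $1\le t\le k$, $g(x)$ is not the proper outcome of $H_{i_t}^x$ and $g(y)$ is not the proper outcome of $H_{i_t}^y$. Standing assumptions: no hyperplane of $g$ is a constant region, and for every $i$ and distinct $j,k\in X_i$ there is $y\in X_{-i}$ with $g(j,y)\neq g(k,y)$. *)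

theory Defs
  imports "HOL-Library.FuncSet"
begin

text \<open>Players are 0..n-1. X i is the strategy set of player i. An element of X_{-i} is an extensional
  function on {..<n} - {i}; the profile (s,y) is y(i:=s).\<close>

definition profiles :: "nat \<Rightarrow> (nat \<Rightarrow> 'b set) \<Rightarrow> (nat \<Rightarrow> 'b) set" where
  "profiles n X = PiE {..<n} X"

definition others :: "nat \<Rightarrow> (nat \<Rightarrow> 'b set) \<Rightarrow> nat \<Rightarrow> (nat \<Rightarrow> 'b) set" where
  "others n X i = PiE ({..<n} - {i}) X"

definition game_form :: "nat \<Rightarrow> (nat \<Rightarrow> 'b set) \<Rightarrow> 'a set \<Rightarrow> ((nat \<Rightarrow> 'b) \<Rightarrow> 'a) \<Rightarrow> bool" where
  "game_form n X A g \<longleftrightarrow> (\<forall>i<n. finite (X i) \<and> X i \<noteq> {}) \<and> finite A \<and> A \<noteq> {}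
     \<and> (\<forall>x\<in>profiles n X. g x \<in> A)"

definition WTT :: "nat \<Rightarrow> (nat \<Rightarrow> 'b set) \<Rightarrow> ((nat \<Rightarrow> 'b) \<Rightarrow> 'a) \<Rightarrow> bool" where
  "WTT n X g \<longleftrightarrow> (\<forall>i<n. \<forall>s\<in>X i. \<forall>s'\<in>X i. s \<noteq> s' \<longrightarrow>
     (\<forall>y\<in>others n X i. \<forall>y'\<in>others n X i. y \<noteq> y' \<longrightarrow>
        g (y(i:=s)) = g (y'(i:=s)) \<or> g (y(i:=s)) = g (y(i:=s')) \<or>
        g (y'(i:=s')) = g (y(i:=s')) \<or> g (y'(i:=s')) = g (y'(i:=s))))"

definition Hneq :: "nat \<Rightarrow> (nat \<Rightarrow> 'b set) \<Rightarrow> ((nat \<Rightarrow> 'b) \<Rightarrow> 'a) \<Rightarrow> nat \<Rightarrow> 'b \<Rightarrow> 'b \<Rightarrow> (nat \<Rightarrow> 'b) set" where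
  "Hneq n X g i j k = {y(i:=j) | y. y \<in> others n X i \<and> g (y(i:=j)) \<noteq> g (y(i:=k))}"

definition arrow :: "nat \<Rightarrow> (nat \<Rightarrow> 'b set) \<Rightarrow> ((nat \<Rightarrow> 'b) \<Rightarrow> 'a) \<Rightarrow> nat \<Rightarrow> 'b \<Rightarrow> 'a \<Rightarrow> 'b \<Rightarrow> bool" where
  "arrow n X g i j c k \<longleftrightarrow> (\<forall>x\<in>Hneq n X g i j k. g x = c)"

definition darrow :: "nat \<Rightarrow> (nat \<Rightarrow> 'b set) \<Rightarrow> 'a set \<Rightarrow> ((nat \<Rightarrow> 'b) \<Rightarrow> 'a) \<Rightarrow> nat \<Rightarrow> 'b \<Rightarrow> 'a \<Rightarrow> 'b \<Rightarrow> bool" where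
  "darrow n X A g i j c k \<longleftrightarrow> arrow n X g i j c k \<and> \<not> (\<exists>d\<in>A. arrow n X g i k d j)"

definition proper_outcome :: "nat \<Rightarrow> (nat \<Rightarrow> 'b set) \<Rightarrow> 'a set \<Rightarrow> ((nat \<Rightarrow> 'b) \<Rightarrow> 'a) \<Rightarrow> nat \<Rightarrow> 'b \<Rightarrow> 'a \<Rightarrow> bool" where
  "proper_outcome n X A g i j c \<longleftrightarrow> (\<exists>k\<in>X i. k \<noteq> j \<and> darrow n X A g i j c k)"

definition sink_hyperplane :: "nat \<Rightarrow> (nat \<Rightarrow> 'b set) \<Rightarrow> 'a set \<Rightarrow> ((nat \<Rightarrow> 'b) \<Rightarrow> 'a) \<Rightarrow> nat \<Rightarrow> 'b \<Rightarrow> bool" where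
  "sink_hyperplane n X A g i j \<longleftrightarrow> (\<forall>k\<in>X i - {j}. \<exists>c\<in>A. arrow n X g i k c j)"

definition no_sink :: "nat \<Rightarrow> (nat \<Rightarrow> 'b set) \<Rightarrow> 'a set \<Rightarrow> ((nat \<Rightarrow> 'b) \<Rightarrow> 'a) \<Rightarrow> bool" where
  "no_sink n X A g \<longleftrightarrow> \<not> (\<exists>i<n. \<exists>j\<in>X i. sink_hyperplane n X A g i j)"

definition standing_assumptions :: "nat \<Rightarrow> (nat \<Rightarrow> 'b set) \<Rightarrow> ((nat \<Rightarrow> 'b) \<Rightarrow> 'a) \<Rightarrow> bool" where
  "standing_assumptions n X g \<longleftrightarrow>
     (\<forall>i<n. \<forall>s\<in>X i. \<not> (\<exists>c. \<forall>x\<in>profiles n X. x i = s \<longrightarrow> g x = c)) \<and>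
     (\<forall>i<n. \<forall>j\<in>X i. \<forall>k\<in>X i. j \<noteq> k \<longrightarrow> (\<exists>y\<in>others n X i. g (y(i:=j)) \<noteq> g (y(i:=k))))"

text \<open>g contains a k-box. "a is not the proper outcome of H_i^x" is rendered as
  \<not> proper_outcome ... i (x i) a.\<close>
definition has_box :: "nat \<Rightarrow> (nat \<Rightarrow> 'b set) \<Rightarrow> 'a set \<Rightarrow> ((nat \<Rightarrow> 'b) \<Rightarrow> 'a) \<Rightarrow> nat \<Rightarrow> bool" where
  "has_box n X A g k \<longleftrightarrow> (\<exists>x\<in>profiles n X. \<exists>y\<in>profiles n X. g x \<noteq> g y \<and>
     card {i. i < n \<and> x i \<noteq> y i} = k \<and>
     (\<forall>i<n. x i \<noteq> y i \<longrightarrow>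
        \<not> proper_outcome n X A g i (x i) (g x) \<and> \<not> proper_outcome n X A g i (y i) (g y)))"

end

theory Submission
  imports Defs
begin

text \<open>Induct on the number of coordinates in which the two profiles of a box differ, and pick
  one of them, direction \<open>i\<close> with \<open>j = x i\<close>, \<open>l = y i\<close>. If moving \<open>x\<close> (or \<open>y\<close>) onto the other
  hyperplane keeps its outcome, a smaller box remains. Otherwise the rows of \<open>x\<close> and \<open>y\<close> lie in
  \<open>H\<^sub>j\<^sup>\<noteq>(l)\<close> and \<open>H\<^sub>l\<^sup>\<noteq>(j)\<close>. Weak total tightness forces every hyperplane that receives no arrow from
  \<open>H\<^sub>l\<close> to send an arrow to it carrying its proper outcome; since \<open>g x\<close>, \<open>g y\<close> are not proper we get
  \<open>H\<^sub>j \<rightarrow>\<^sup>c H\<^sub>l\<close> and \<open>H\<^sub>l \<rightarrow>\<^sup>d H\<^sub>j\<close> with \<open>c \<noteq> d\<close>. As \<open>H\<^sub>j\<close> is no sink, some \<open>H\<^sub>m\<close> sends it no arrow, so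
  \<open>H\<^sub>j \<Rightarrow> H\<^sub>m\<close> with a proper outcome \<open>p \<noteq> c\<close>; the arrow \<open>H\<^sub>j \<rightarrow>\<^sup>c H\<^sub>l\<close> copies the witnesses of \<open>p\<close> into \<open>H\<^sub>l\<close>,
  which then yields \<open>H\<^sub>l \<Rightarrow>\<^sup>d H\<^sub>m\<close>, i.e. \<open>d\<close> is proper for \<open>H\<^sub>l\<close>, a contradiction.\<close>

lemma fun_upd_others_in_profiles:
  assumes "y \<in> others n X i" "i < n" "s \<in> X i"
  shows "y(i:=s) \<in> profiles n X"
proof -
  have "y(i:=s) \<in> PiE (insert i ({..<n} - {i})) X"
    by (rule PiE_fun_upd) (use assms in \<open>auto simp: others_def\<close>)
  moreover have "insert i ({..<n} - {i}) = {..<n}" using assms(2) by auto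
  ultimately show ?thesis unfolding profiles_def by simp
qed

lemma profile_restrict_others:
  assumes "x \<in> profiles n X" "i < n"
  shows "restrict x ({..<n} - {i}) \<in> others n X i"
    and "(restrict x ({..<n} - {i}))(i := x i) = x"
  using assms unfolding others_def profiles_def by (auto simp: PiE_iff extensional_def)

lemma profile_fun_upd:
  assumes "x \<in> profiles n X" "i < n" "s \<in> X i"
  shows "x(i := s) \<in> profiles n X"
  using assms unfolding profiles_def by (auto simp: PiE_iff extensional_def)

lemma arrow_iff:
  "arrow n X g i j c k \<longleftrightarrow>
     (\<forall>y\<in>others n X i. g (y(i:=j)) \<noteq> g (y(i:=k)) \<longrightarrow> g (y(i:=j)) = c)"
  unfolding arrow_def Hneq_def by blast

lemma WTT_disagreement_rows_constant:
  assumes wtt: "WTT n X g"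
    and i: "i < n" and s: "s \<in> X i" and s': "s' \<in> X i" and ss: "s \<noteq> s'"
    and w1: "w1 \<in> others n X i" and w2: "w2 \<in> others n X i"
    and d1: "g (w1(i:=s)) \<noteq> g (w1(i:=s'))" and d2: "g (w2(i:=s)) \<noteq> g (w2(i:=s'))"
    and v: "g (w1(i:=s')) \<noteq> g (w2(i:=s'))"
    and w: "w \<in> others n X i" and dw: "g (w(i:=s)) \<noteq> g (w(i:=s'))"
  shows "g (w(i:=s)) = g (w1(i:=s))"
proof -
  have W: "\<And>y y'. y \<in> others n X i \<Longrightarrow> y' \<in> others n X i \<Longrightarrow> y \<noteq> y' \<Longrightarrow>
        g (y(i:=s)) = g (y'(i:=s)) \<or> g (y(i:=s)) = g (y(i:=s')) \<or>
        g (y'(i:=s')) = g (y(i:=s')) \<or> g (y'(i:=s')) = g (y'(i:=s))"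
    using wtt i s s' ss unfolding WTT_def by blast
  have "w1 \<noteq> w2" using v by auto
  hence e12: "g (w1(i:=s)) = g (w2(i:=s))" using W[OF w1 w2] d1 d2 v by auto
  consider "w = w1" | "w = w2" | "w \<noteq> w1" "w \<noteq> w2" by blast
  then show ?thesis
  proof cases
    case 3
    from W[OF w w1 3(1)] W[OF w w2 3(2)] dw d1 d2 v e12 show ?thesis by auto
  qed (use e12 in simp_all)
qed

lemma not_arrow_imp_disagreement_rows:
  assumes gf: "game_form n X A g"
    and i: "i < n" and s': "s' \<in> X i"
    and na: "\<not> (\<exists>a\<in>A. arrow n X g i s' a s)"
  obtains w1 w2 where "w1 \<in> others n X i" "w2 \<in> others n X i"
    "g (w1(i:=s)) \<noteq> g (w1(i:=s'))" "g (w2(i:=s)) \<noteq> g (w2(i:=s'))"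
    "g (w1(i:=s')) \<noteq> g (w2(i:=s'))"
proof (cases "\<exists>w0\<in>others n X i. g (w0(i:=s)) \<noteq> g (w0(i:=s'))")
  case True
  then obtain w0 where w0: "w0 \<in> others n X i" "g (w0(i:=s)) \<noteq> g (w0(i:=s'))" by blast
  have "g (w0(i:=s')) \<in> A"
    using gf fun_upd_others_in_profiles[OF w0(1) i s'] unfolding game_form_def by blast
  hence "\<not> arrow n X g i s' (g (w0(i:=s'))) s" using na by blast
  then show ?thesis using that w0 unfolding arrow_iff by metis
next
  case False
  obtain a where "a \<in> A" using gf unfolding game_form_def by blast
  moreover have "arrow n X g i s' a s" unfolding arrow_iff using False by metis
  ultimately show ?thesis using na by blast
qed

lemma not_arrow_imp_proper_arrow:
  assumes gf: "game_form n X A g" and wtt: "WTT n X g"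
    and i: "i < n" and s: "s \<in> X i" and s': "s' \<in> X i" and ss: "s \<noteq> s'"
    and na: "\<not> (\<exists>a\<in>A. arrow n X g i s' a s)"
  obtains c where "arrow n X g i s c s'" "proper_outcome n X A g i s c"
proof -
  obtain w1 w2 where w: "w1 \<in> others n X i" "w2 \<in> others n X i"
    "g (w1(i:=s)) \<noteq> g (w1(i:=s'))" "g (w2(i:=s)) \<noteq> g (w2(i:=s'))"
    "g (w1(i:=s')) \<noteq> g (w2(i:=s'))"
    using not_arrow_imp_disagreement_rows[OF gf i s' na] by blast
  have ar: "arrow n X g i s (g (w1(i:=s))) s'"
    unfolding arrow_iff using WTT_disagreement_rows_constant[OF wtt i s s' ss w] by blast
  moreover have "proper_outcome n X A g i s (g (w1(i:=s)))"
    unfolding proper_outcome_def darrow_def using ar na s' ss by (intro bexI[of _ s']) auto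
  ultimately show ?thesis using that by blast
qed

lemma arrow_outcome_unique:
  assumes "arrow n X g i j c l" "z \<in> others n X i" "g (z(i:=j)) \<noteq> g (z(i:=l))"
  shows "g (z(i:=j)) = c"
  using assms unfolding arrow_iff by blast

lemma not_proper_imp_reverse_arrow:
  assumes gf: "game_form n X A g" and wtt: "WTT n X g"
    and i: "i < n" and j: "j \<in> X i" and l: "l \<in> X i" and jl: "j \<noteq> l"
    and w: "w \<in> others n X i" and dw: "g (w(i:=l)) \<noteq> g (w(i:=j))"
    and np: "\<not> proper_outcome n X A g i l (g (w(i:=l)))"
  shows "\<exists>a\<in>A. arrow n X g i j a l"
proof (rule ccontr)
  assume "\<not> ?thesis"
  then obtain c where "arrow n X g i l c j" "proper_outcome n X A g i l c"
    using not_arrow_imp_proper_arrow[OF gf wtt i l j jl[symmetric]] by blast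
  then show False using np arrow_outcome_unique[OF _ w dw] by blast
qed

lemma opposite_arrows_imp_proper_outcome:
  assumes gf: "game_form n X A g" and wtt: "WTT n X g" and ns: "no_sink n X A g"
    and i: "i < n" and j: "j \<in> X i" and l: "l \<in> X i"
    and arJ: "arrow n X g i j c l" and arL: "arrow n X g i l d j"
    and z: "z \<in> others n X i" and gzj: "g (z(i:=j)) = c" and gzl: "g (z(i:=l)) = d"
    and cd: "c \<noteq> d"
    and npj: "\<not> proper_outcome n X A g i j c"
  shows "proper_outcome n X A g i l d"
proof -
  obtain m where m: "m \<in> X i" "m \<noteq> j" "\<not> (\<exists>a\<in>A. arrow n X g i m a j)"
    using ns i j unfolding no_sink_def sink_hyperplane_def by blast
  obtain w1 w2 where ww: "w1 \<in> others n X i" "w2 \<in> others n X i"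
    "g (w1(i:=j)) \<noteq> g (w1(i:=m))" "g (w2(i:=j)) \<noteq> g (w2(i:=m))"
    "g (w1(i:=m)) \<noteq> g (w2(i:=m))"
    using not_arrow_imp_disagreement_rows[OF gf i m(1) m(3)] by blast
  define p where "p = g (w1(i:=j))"
  have w2p: "g (w2(i:=j)) = p"
    using WTT_disagreement_rows_constant[OF wtt i j m(1) m(2)[symmetric] ww ww(2,4)]
    unfolding p_def .
  have arM: "arrow n X g i j p m"
    unfolding arrow_iff p_def
    using WTT_disagreement_rows_constant[OF wtt i j m(1) m(2)[symmetric] ww] by blast
  have "proper_outcome n X A g i j p"
    unfolding proper_outcome_def darrow_def using arM m by (intro bexI[of _ m]) auto
  hence pc: "p \<noteq> c" using npj by blast
  \<comment> \<open>the arrow \<open>H\<^sub>j \<rightarrow>\<^sup>c H\<^sub>l\<close> copies the outcome \<open>p \<noteq> c\<close> of both rows onto \<open>H\<^sub>l\<close>\<close>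
  have hl1: "g (w1(i:=l)) = p" using arJ ww(1) pc unfolding arrow_iff p_def by metis
  have hl2: "g (w2(i:=l)) = p" using arJ ww(2) w2p pc unfolding arrow_iff by metis
  have gzm: "g (z(i:=m)) = c" using arM z gzj pc unfolding arrow_iff by metis
  have ml: "l \<noteq> m" using gzm gzl cd by auto
  have e1: "g (w1(i:=l)) \<noteq> g (w1(i:=m))" using hl1 ww(3) unfolding p_def by simp
  have e2: "g (w2(i:=l)) \<noteq> g (w2(i:=m))" using hl2 ww(4) w2p by simp
  have arLM: "arrow n X g i l p m"
    unfolding arrow_iff
    using WTT_disagreement_rows_constant[OF wtt i l m(1) ml ww(1,2) e1 e2 ww(5)] hl1 by metis
  have "d = p" using arrow_outcome_unique[OF arLM z] gzl gzm cd by simp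
  moreover have "\<not> (\<exists>b\<in>A. arrow n X g i m b l)"
    using ww(1,2,5) e1 e2 unfolding arrow_iff by metis
  ultimately show ?thesis
    unfolding proper_outcome_def darrow_def using arLM m(1) ml by (intro bexI[of _ m]) auto
qed

definition box_pair :: "nat \<Rightarrow> (nat \<Rightarrow> 'b set) \<Rightarrow> 'a set \<Rightarrow> ((nat \<Rightarrow> 'b) \<Rightarrow> 'a) \<Rightarrow>
    (nat \<Rightarrow> 'b) \<Rightarrow> (nat \<Rightarrow> 'b) \<Rightarrow> bool" where
  "box_pair n X A g x y \<longleftrightarrow> x \<in> profiles n X \<and> y \<in> profiles n X \<and> g x \<noteq> g y \<and>
     (\<forall>i<n. x i \<noteq> y i \<longrightarrow>
        \<not> proper_outcome n X A g i (x i) (g x) \<and> \<not> proper_outcome n X A g i (y i) (g y))"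

lemma box_pair_sym: "box_pair n X A g x y \<Longrightarrow> box_pair n X A g y x"
  unfolding box_pair_def by auto

lemma box_pair_fun_upd:
  assumes "box_pair n X A g x y" "i < n" "g (x(i := y i)) = g x"
  shows "box_pair n X A g (x(i := y i)) y"
  using assms profile_fun_upd[of x n X i "y i"] unfolding box_pair_def profiles_def
  by (auto simp: PiE_iff)

lemma box_pair_fun_upd_keeps_outcome:
  assumes gf: "game_form n X A g" and wtt: "WTT n X g" and ns: "no_sink n X A g"
    and box: "box_pair n X A g x y" and i: "i < n" and xy: "x i \<noteq> y i"
  shows "g (x(i := y i)) = g x \<or> g (y(i := x i)) = g y"
proof (rule ccontr)
  assume "\<not> ?thesis"
  hence gx: "g (x(i := y i)) \<noteq> g x" and gy: "g (y(i := x i)) \<noteq> g y" by auto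
  have x: "x \<in> profiles n X" and y: "y \<in> profiles n X" and gxy: "g x \<noteq> g y"
    and npx: "\<not> proper_outcome n X A g i (x i) (g x)"
    and npy: "\<not> proper_outcome n X A g i (y i) (g y)"
    using box i xy unfolding box_pair_def by auto
  have xi: "x i \<in> X i" and yi: "y i \<in> X i"
    using x y i unfolding profiles_def by (auto simp: PiE_iff)
  define z where "z = restrict x ({..<n} - {i})"
  define w where "w = restrict y ({..<n} - {i})"
  have z: "z \<in> others n X i" and xz: "z(i := x i) = x"
    using profile_restrict_others[OF x i] unfolding z_def by auto
  have w: "w \<in> others n X i" and yw: "w(i := y i) = y"
    using profile_restrict_others[OF y i] unfolding w_def by auto
  have xz': "z(i := y i) = x(i := y i)" and yw': "w(i := x i) = y(i := x i)"
    using xz yw by (metis fun_upd_upd)+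
  have dz: "g (z(i := x i)) \<noteq> g (z(i := y i))" and dw: "g (w(i := y i)) \<noteq> g (w(i := x i))"
    using xz xz' yw yw' gx gy by simp_all
  obtain a where "arrow n X g i (x i) a (y i)"
    using not_proper_imp_reverse_arrow[OF gf wtt i xi yi xy w dw] npy yw by auto
  hence arJ: "arrow n X g i (x i) (g x) (y i)"
    using arrow_outcome_unique[OF _ z dz] xz by metis
  obtain b where "arrow n X g i (y i) b (x i)"
    using not_proper_imp_reverse_arrow[OF gf wtt i yi xi xy[symmetric] z dz] npx xz
    by auto
  hence arL: "arrow n X g i (y i) (g y) (x i)"
    using arrow_outcome_unique[OF _ w dw] yw by metis
  have "g (z(i := y i)) = g y"
    using arrow_outcome_unique[OF arL z dz[symmetric]] .
  then have "proper_outcome n X A g i (y i) (g y)"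
    using opposite_arrows_imp_proper_outcome[OF gf wtt ns i xi yi arJ arL z _ _ gxy npx] xz
    by simp
  with npy show False ..
qed

lemma no_box_pair:
  assumes gf: "game_form n X A g" and wtt: "WTT n X g" and ns: "no_sink n X A g"
  shows "\<not> box_pair n X A g x y"
proof
  assume "box_pair n X A g x y"
  then show False
  proof (induction "card {i. i < n \<and> x i \<noteq> y i}" arbitrary: x y)
    case 0
    have "x \<in> PiE {..<n} X" "y \<in> PiE {..<n} X"
      using "0.prems" unfolding box_pair_def profiles_def by auto
    moreover have "\<And>t. t \<in> {..<n} \<Longrightarrow> x t = y t" using "0.hyps" by auto
    ultimately have "x = y" by (rule PiE_ext)
    then show False using "0.prems" unfolding box_pair_def by simp
  next
    case (Suc N)
    let ?S = "{i. i < n \<and> x i \<noteq> y i}"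
    have "?S \<noteq> {}" using Suc.hyps(2) by (metis card.empty nat.distinct(1))
    then obtain i where i: "i < n" "x i \<noteq> y i" by blast
    have card: "card (?S - {i}) = N" using Suc.hyps(2) i by simp
    from box_pair_fun_upd_keeps_outcome[OF gf wtt ns Suc.prems i] show False
    proof
      assume "g (x(i := y i)) = g x"
      with box_pair_fun_upd[OF Suc.prems i(1)] have "box_pair n X A g (x(i := y i)) y" .
      moreover have "{t. t < n \<and> (x(i := y i)) t \<noteq> y t} = ?S - {i}" by auto
      ultimately show False using Suc.hyps(1) card by metis
    next
      assume "g (y(i := x i)) = g y"
      with box_pair_fun_upd[OF box_pair_sym[OF Suc.prems] i(1)]
      have "box_pair n X A g x (y(i := x i))" by (simp add: box_pair_sym)
      moreover have "{t. t < n \<and> x t \<noteq> (y(i := x i)) t} = ?S - {i}" by auto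
      ultimately show False using Suc.hyps(1) card by metis
    qed
  qed
qed

theorem mainTheorem8:
  fixes n k :: nat and X :: "nat \<Rightarrow> 'b set" and A :: "'a set" and g :: "(nat \<Rightarrow> 'b) \<Rightarrow> 'a"
  assumes "game_form n X A g"
    and "WTT n X g"
    and "no_sink n X A g"
    and "standing_assumptions n X g"
    and "1 \<le> k" and "k \<le> n"
  shows "\<not> has_box n X A g k"
  using no_box_pair[OF assms(1-3)] unfolding has_box_def box_pair_def by blast

end
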